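(* Let $d\ge1$ and $k\ge d-1$ be integers. Then every injective function $f\colon\mathbb{R}^{k+1}\to\mathbb{R}^d$ satisfies $\alpha(f)\ge c_{d-1,k}$, and every injective function $f\colon S^k\to\mathbb{R}^d$ satisfies $\alpha(f)\ge c_{d-1,k}$ (functions not assumed continuous).
   Context: For a topological space $X$, $\mathrm{Conf}_2(X)=\{(x,y)\in X\times X: x\neq y\}$ with the subspace topology. Spheres carry the geodesic metric $d(u,v)=\arccos\langle u,v\rangle$. For a topological space $X$ and a metric space $Y$, $\delta(g)=\inf\{\delta\ge 0 : \text{for every } x\in X \text{ there is an open neighborhood } U_x \text{ of } x \text{ with } \operatorname{diam}(g(U_x))\le\delta\}$. For injective $f\colon X\to\mathbb{R}^d$, $\Phi_f(x,y)=\frac{f(x)-f(y)}{\|f(x)-f(y)\|}\in S^{d-1}$ and $\alpha(f)=\delta(\Phi_f)$. For a metric space $Y$ and $r\ge0$, $\mathrm{VR}(Y;r)$ is the Vietoris–Rips complex (simplices: finite subsets of diameter $\le r$), geometrically realized. For $k\ge n\ge0$, $c_{n,k}=\inf\{r\ge0:\text{there is a continuous } \mathbb{Z}/2\text{-equivariant map } S^k\to\mathrm{VR}(S^n;r)\}$, where $\mathbb{Z}/2$ acts antipodally on $S^k$ and on $\mathrm{VR}(S^n;r)$ via the antipodal map on vertices. *)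

theory Defs
  imports "HOL-Analysis.Analysis"
begin

definition sdist :: "'b::real_inner \<Rightarrow> 'b \<Rightarrow> real" where
  "sdist u v = arccos (u \<bullet> v)"

definition conf2 :: "'a topology \<Rightarrow> ('a \<times> 'a) topology" where
  "conf2 X = subtopology (prod_topology X X)
      {p. fst p \<in> topspace X \<and> snd p \<in> topspace X \<and> fst p \<noteq> snd p}"

text \<open>delta(g) for g from a topological space into a sphere with the geodesic metric;
  "diam (g U) <= d" is written out as: all pairwise distances are <= d.\<close>
definition modulus :: "'x topology \<Rightarrow> ('x \<Rightarrow> 'b::real_inner) \<Rightarrow> real" where
  "modulus X g = Inf {\<delta>. \<delta> \<ge> 0 \<and> (\<forall>x\<in>topspace X. \<exists>U. openin X U \<and> x \<in> U \<and>
       (\<forall>u\<in>U. \<forall>v\<in>U. sdist (g u) (g v) \<le> \<delta>))}"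

definition Phi :: "('a \<Rightarrow> 'b::real_normed_vector) \<Rightarrow> 'a \<times> 'a \<Rightarrow> 'b" where
  "Phi f p = (f (fst p) - f (snd p)) /\<^sub>R norm (f (fst p) - f (snd p))"

definition alpha :: "'a topology \<Rightarrow> ('a \<Rightarrow> 'b::real_inner) \<Rightarrow> real" where
  "alpha X f = modulus (conf2 X) (Phi f)"

text \<open>Geometric realization of the Vietoris--Rips complex VR(Y;r) of Y (a subset of a sphere,
  geodesic metric): points are finitely supported convex weight functions on Y whose support
  is a simplex (diameter <= r).  Topology: the weak (coherent) topology with respect to the
  closed simplices, each carrying its Euclidean topology (= subspace of the product topology
  on functions, since the support is a fixed finite set).\<close>
definition supp :: "('b \<Rightarrow> real) \<Rightarrow> 'b set" where
  "supp l = {y. l y \<noteq> 0}"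

definition is_simplex :: "'b::real_inner set \<Rightarrow> real \<Rightarrow> 'b set \<Rightarrow> bool" where
  "is_simplex Y r \<sigma> \<longleftrightarrow> finite \<sigma> \<and> \<sigma> \<noteq> {} \<and> \<sigma> \<subseteq> Y \<and> (\<forall>u\<in>\<sigma>. \<forall>v\<in>\<sigma>. sdist u v \<le> r)"

definition vr_carrier :: "'b::real_inner set \<Rightarrow> real \<Rightarrow> ('b \<Rightarrow> real) set" where
  "vr_carrier Y r = {l. (\<forall>y. l y \<ge> 0) \<and> is_simplex Y r (supp l) \<and> sum l (supp l) = 1}"

definition closed_simplex :: "'b::real_inner set \<Rightarrow> real \<Rightarrow> 'b set \<Rightarrow> ('b \<Rightarrow> real) set" where
  "closed_simplex Y r \<sigma> = {l \<in> vr_carrier Y r. supp l \<subseteq> \<sigma>}"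

definition vr_top :: "'b::real_inner set \<Rightarrow> real \<Rightarrow> ('b \<Rightarrow> real) topology" where
  "vr_top Y r = topology (\<lambda>U. U \<subseteq> vr_carrier Y r \<and>
     (\<forall>\<sigma>. is_simplex Y r \<sigma> \<longrightarrow>
        openin (subtopology (product_topology (\<lambda>_. euclideanreal) UNIV) (closed_simplex Y r \<sigma>))
               (U \<inter> closed_simplex Y r \<sigma>)))"

definition vr_antipode :: "('b::real_vector \<Rightarrow> real) \<Rightarrow> ('b \<Rightarrow> real)" where
  "vr_antipode l = (\<lambda>y. l (- y))"

text \<open>c(S, T) = inf of r >= 0 such that there is a continuous Z/2-equivariant map
  S \<rightarrow> VR(T; r); with S = S^k and T = S^n this is c_{n,k}.\<close>
definition c_VR :: "'a::real_normed_vector set \<Rightarrow> 'b::real_inner set \<Rightarrow> real" where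
  "c_VR S T = Inf {r. r \<ge> 0 \<and> (\<exists>g. continuous_map (subtopology euclidean S) (vr_top T r) g \<and>
        (\<forall>x\<in>S. g (- x) = vr_antipode (g x)))}"

end

theory Submission
  imports Defs
begin

(* If delta is admissible for alpha(f), the odd map h x = Phi_f(x, -x) on S^k takes delta-close
   values on small neighbourhoods, hence, by compactness, on all balls of some radius r. A partition
   of unity subordinate to the r-balls around a finite antipodally symmetric r-net sends x to a
   convex combination of the vertices h p with p near x, which span a simplex of VR(S^(d-1); delta).
   This gives a continuous equivariant map S^k -> VR(S^(d-1); delta), so c_(d-1,k) <= delta. *)

lemma openin_vr_top:
  "openin (vr_top Y r) U \<longleftrightarrow> U \<subseteq> vr_carrier Y r \<and>
     (\<forall>\<sigma>. is_simplex Y r \<sigma> \<longrightarrow>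
        openin (subtopology (product_topology (\<lambda>_. euclideanreal) UNIV) (closed_simplex Y r \<sigma>))
               (U \<inter> closed_simplex Y r \<sigma>))"
proof -
  let ?O = "\<lambda>\<sigma> U. openin (subtopology (product_topology (\<lambda>_. euclideanreal) UNIV)
              (closed_simplex Y r \<sigma>)) (U \<inter> closed_simplex Y r \<sigma>)"
  have "?O \<sigma> (S \<inter> T)" if "?O \<sigma> S" "?O \<sigma> T" for \<sigma> S T
  proof -
    have "(S \<inter> T) \<inter> closed_simplex Y r \<sigma> = (S \<inter> closed_simplex Y r \<sigma>) \<inter> (T \<inter> closed_simplex Y r \<sigma>)"
      by blast
    then show ?thesis
      using openin_Int[OF that] by simp
  qed
  moreover have "?O \<sigma> (\<Union>K)" if "\<forall>S\<in>K. ?O \<sigma> S" for \<sigma> K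
  proof -
    have "\<Union>K \<inter> closed_simplex Y r \<sigma> = (\<Union>S\<in>K. S \<inter> closed_simplex Y r \<sigma>)"
      by blast
    also have "openin (subtopology (product_topology (\<lambda>_. euclideanreal) UNIV)
              (closed_simplex Y r \<sigma>)) \<dots>"
      using that by (intro openin_Union) auto
    finally show ?thesis .
  qed
  ultimately have "istopology (\<lambda>U. U \<subseteq> vr_carrier Y r \<and> (\<forall>\<sigma>. is_simplex Y r \<sigma> \<longrightarrow> ?O \<sigma> U))"
    unfolding istopology_def by (simp add: Ball_def) blast
  then show ?thesis
    unfolding vr_top_def by simp
qed

lemma topspace_vr_top: "topspace (vr_top Y r) = vr_carrier Y r"
proof -
  have "openin (vr_top Y r) (vr_carrier Y r)"
    unfolding openin_vr_top closed_simplex_def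
    by (auto simp: Int_absorb1 openin_subtopology_refl)
  then show ?thesis
    using openin_subset[of "vr_top Y r"] by (auto simp: openin_vr_top topspace_def)
qed

lemma closed_simplex_eq:
  assumes "is_simplex Y r \<sigma>"
  shows "closed_simplex Y r \<sigma> =
    (\<Pi>\<^sub>E y\<in>UNIV. if y \<in> \<sigma> then {0..} else {0}) \<inter> {l. sum l \<sigma> = 1}"
proof (intro set_eqI iffI)
  have fin: "finite \<sigma>"
    using assms by (simp add: is_simplex_def)
  have sum_supp: "sum l (supp l) = sum l \<sigma>" if "supp l \<subseteq> \<sigma>" for l :: "'a \<Rightarrow> real"
    using fin that by (intro sum.mono_neutral_left) (auto simp: supp_def)
  fix l
  show "l \<in> closed_simplex Y r \<sigma>" if "l \<in> (\<Pi>\<^sub>E y\<in>UNIV. if y \<in> \<sigma> then {0..} else {0}) \<inter> {l. sum l \<sigma> = 1}"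
  proof -
    have l: "\<forall>y. l y \<ge> 0" "supp l \<subseteq> \<sigma>" "sum l \<sigma> = 1"
      using that by (auto simp: PiE_UNIV_domain Pi_iff supp_def split: if_splits)
    then have "supp l \<noteq> {}"
      using sum_supp by force
    then have "is_simplex Y r (supp l)"
      using assms l(2) finite_subset unfolding is_simplex_def by blast
    then show ?thesis
      using l sum_supp unfolding closed_simplex_def vr_carrier_def by auto
  qed
  show "l \<in> (\<Pi>\<^sub>E y\<in>UNIV. if y \<in> \<sigma> then {0..} else {0}) \<inter> {l. sum l \<sigma> = 1}"
    if "l \<in> closed_simplex Y r \<sigma>"
    using that sum_supp unfolding closed_simplex_def vr_carrier_def
    by (auto simp: PiE_UNIV_domain Pi_iff supp_def)
qed

lemma closedin_closed_simplex:
  assumes "is_simplex Y r \<sigma>"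
  shows "closedin (product_topology (\<lambda>_. euclideanreal) UNIV) (closed_simplex Y r \<sigma>)"
proof -
  have "finite \<sigma>"
    using assms by (simp add: is_simplex_def)
  then have "continuous_map (product_topology (\<lambda>_. euclideanreal) UNIV) euclideanreal (\<lambda>l. sum l \<sigma>)"
    by (intro continuous_map_sum continuous_map_product_projection) auto
  then have "closedin (product_topology (\<lambda>_. euclideanreal) UNIV) {l. sum l \<sigma> = 1}"
    using closedin_continuous_map_preimage[of _ _ _ "{1}"] by force
  then show ?thesis
    unfolding closed_simplex_eq[OF assms]
    by (intro closedin_Int) (auto simp: closedin_product_topology)
qed

lemma continuous_map_into_vr_top:
  assumes cont: "continuous_map X (product_topology (\<lambda>_. euclideanreal) UNIV) g"
    and carrier: "g \<in> topspace X \<rightarrow> vr_carrier Y r"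
    and "finite W" and supp: "\<And>x. x \<in> topspace X \<Longrightarrow> supp (g x) \<subseteq> W"
  shows "continuous_map X (vr_top Y r) g"
  unfolding continuous_map_def topspace_vr_top
proof (intro conjI allI impI carrier)
  fix U assume U: "openin (vr_top Y r) U"
  define \<Sigma> where "\<Sigma> = {\<sigma>. \<sigma> \<subseteq> W \<and> is_simplex Y r \<sigma>}"
  have "finite \<Sigma>"
    using \<open>finite W\<close> unfolding \<Sigma>_def by (auto intro: finite_subset[of _ "Pow W"])
  have closed: "closedin X {x \<in> topspace X. g x \<in> closed_simplex Y r \<sigma> - U}" if "\<sigma> \<in> \<Sigma>" for \<sigma>
  proof -
    have \<sigma>: "is_simplex Y r \<sigma>"
      using that by (simp add: \<Sigma>_def)
    then obtain T where T: "openin (product_topology (\<lambda>_. euclideanreal) UNIV) T"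
      "U \<inter> closed_simplex Y r \<sigma> = T \<inter> closed_simplex Y r \<sigma>"
      using U by (auto simp: openin_vr_top openin_subtopology)
    then have "closed_simplex Y r \<sigma> - U = closed_simplex Y r \<sigma> - T"
      by blast
    moreover have "closedin (product_topology (\<lambda>_. euclideanreal) UNIV) (closed_simplex Y r \<sigma> - T)"
      using closedin_closed_simplex[OF \<sigma>] T(1) by (rule closedin_diff)
    then have "closedin X {x \<in> topspace X. g x \<in> closed_simplex Y r \<sigma> - T}"
      by (rule closedin_continuous_map_preimage[OF cont])
    ultimately show ?thesis
      by simp
  qed
  have "g x \<in> closed_simplex Y r (supp (g x))" "supp (g x) \<in> \<Sigma>" if "x \<in> topspace X" for x
    using carrier supp that by (auto simp: closed_simplex_def \<Sigma>_def vr_carrier_def)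
  then have "{x \<in> topspace X. g x \<in> U} =
      topspace X - (\<Union>\<sigma>\<in>\<Sigma>. {x \<in> topspace X. g x \<in> closed_simplex Y r \<sigma> - U})"
    by blast
  also have "openin X \<dots>"
    using \<open>finite \<Sigma>\<close> closed by (intro openin_diff closedin_Union) auto
  finally show "openin X {x \<in> topspace X. g x \<in> U}" .
qed

definition tent :: "real \<Rightarrow> 'a::metric_space \<Rightarrow> 'a \<Rightarrow> real" where
  "tent r p x = max 0 (r - dist x p)"

definition nerve_map :: "real \<Rightarrow> 'a::metric_space set \<Rightarrow> ('a \<Rightarrow> 'b) \<Rightarrow> 'a \<Rightarrow> 'b \<Rightarrow> real" where
  "nerve_map r P h x v = (\<Sum>p\<in>{p\<in>P. h p = v}. tent r p x) / (\<Sum>p\<in>P. tent r p x)"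

lemma tent_nonneg: "0 \<le> tent r p x"
  by (simp add: tent_def)

lemma tent_eq_0_iff: "tent r p x = 0 \<longleftrightarrow> r \<le> dist x p"
  by (auto simp: tent_def max_def)

lemma sum_tent_pos:
  assumes "finite P" "p \<in> P" "dist x p < r"
  shows "0 < (\<Sum>p\<in>P. tent r p x)"
proof -
  have "0 < tent r p x"
    using assms(3) by (simp add: tent_def)
  also have "\<dots> \<le> (\<Sum>p\<in>P. tent r p x)"
    using assms(1,2) by (intro member_le_sum) (auto simp: tent_nonneg)
  finally show ?thesis .
qed

lemma nerve_map_nonneg: "0 \<le> nerve_map r P h x v"
  unfolding nerve_map_def by (simp add: sum_nonneg tent_nonneg)

lemma supp_nerve_map:
  assumes "finite P" "p \<in> P" "dist x p < r"
  shows "supp (nerve_map r P h x) = h ` {p \<in> P. dist x p < r}"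
proof -
  have "v \<in> supp (nerve_map r P h x) \<longleftrightarrow> (\<exists>p\<in>{p\<in>P. h p = v}. tent r p x \<noteq> 0)" for v
    using sum_tent_pos[OF assms] assms(1)
    by (simp add: supp_def nerve_map_def sum_nonneg_eq_0_iff tent_nonneg) blast
  then show ?thesis
    by (auto simp: tent_eq_0_iff not_le)
qed

lemma sum_nerve_map:
  assumes "finite P" "p \<in> P" "dist x p < r"
  shows "sum (nerve_map r P h x) (h ` P) = 1"
proof -
  have "sum (nerve_map r P h x) (h ` P) =
      (\<Sum>v\<in>h ` P. \<Sum>p\<in>{p\<in>P. h p = v}. tent r p x) / (\<Sum>p\<in>P. tent r p x)"
    unfolding nerve_map_def by (simp add: sum_divide_distrib)
  also have "\<dots> = 1"
    using sum_tent_pos[OF assms] by (simp add: sum.image_gen[OF assms(1), symmetric])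
  finally show ?thesis .
qed

lemma nerve_map_in_vr_carrier:
  assumes "finite P" and simplex: "is_simplex Y \<delta> (h ` {p \<in> P. dist x p < r})"
  shows "nerve_map r P h x \<in> vr_carrier Y \<delta>"
proof -
  obtain p where p: "p \<in> P" "dist x p < r"
    using simplex by (auto simp: is_simplex_def)
  note supp_eq = supp_nerve_map[OF assms(1) p]
  have "supp (nerve_map r P h x) \<subseteq> h ` P"
    by (auto simp: supp_eq)
  then have "sum (nerve_map r P h x) (supp (nerve_map r P h x)) = sum (nerve_map r P h x) (h ` P)"
    using assms(1) by (intro sum.mono_neutral_left) (auto simp: supp_def)
  then show ?thesis
    using simplex sum_nerve_map[OF assms(1) p]
    by (simp add: vr_carrier_def supp_eq nerve_map_nonneg)
qed

lemma nerve_map_uminus: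
  fixes P :: "'a::real_normed_vector set" and h :: "'a \<Rightarrow> 'b::real_vector"
  assumes "uminus ` P = P" and odd: "\<And>p. p \<in> P \<Longrightarrow> h (- p) = - h p"
  shows "nerve_map r P h (- x) = vr_antipode (nerve_map r P h x)"
proof
  fix v
  have tent_uminus: "tent r p (- x) = tent r (- p) x" for p
    unfolding tent_def by (metis dist_minus minus_minus)
  have neg_mem: "- p \<in> P" if "p \<in> P" for p
    using assms(1) that by blast
  have "(\<Sum>p\<in>{p\<in>P. h p = - v}. tent r p x) = (\<Sum>p\<in>{p\<in>P. h p = v}. tent r (- p) x)"
    by (rule sum.reindex_bij_witness[of _ uminus uminus]) (auto simp: neg_mem odd)
  moreover have "(\<Sum>p\<in>P. tent r p x) = (\<Sum>p\<in>P. tent r (- p) x)"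
    by (rule sum.reindex_bij_witness[of _ uminus uminus]) (auto simp: neg_mem)
  ultimately show "nerve_map r P h (- x) v = vr_antipode (nerve_map r P h x) v"
    by (simp add: nerve_map_def vr_antipode_def tent_uminus)
qed

lemma continuous_map_nerve_map:
  assumes "finite P" and cover: "\<And>x. x \<in> S \<Longrightarrow> \<exists>p\<in>P. dist x p < r"
  shows "continuous_map (top_of_set S) (product_topology (\<lambda>_. euclideanreal) UNIV) (nerve_map r P h)"
  unfolding continuous_map_componentwise_UNIV continuous_map_iff_continuous
proof
  fix v
  have "(\<Sum>p\<in>P. tent r p x) \<noteq> 0" if "x \<in> S" for x
    using cover[OF that] sum_tent_pos[OF assms(1)] by fastforce
  then show "continuous_on S (\<lambda>x. nerve_map r P h x v)"
    unfolding nerve_map_def tent_def by (intro continuous_intros) auto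
qed

lemma Lebesgue_number_pairwise:
  fixes S :: "'a::metric_space set"
  assumes "compact S"
    and local: "\<And>x. x \<in> S \<Longrightarrow> \<exists>V. open V \<and> x \<in> V \<and> (\<forall>p\<in>S \<inter> V. \<forall>q\<in>S \<inter> V. R p q)"
  obtains e where "0 < e"
    "\<And>x p q. \<lbrakk>x \<in> S; p \<in> S; q \<in> S; dist x p < e; dist x q < e\<rbrakk> \<Longrightarrow> R p q"
proof -
  define \<G> where "\<G> = {V. open V \<and> (\<forall>p\<in>S \<inter> V. \<forall>q\<in>S \<inter> V. R p q)}"
  have "S \<subseteq> \<Union>\<G>"
    using local unfolding \<G>_def by blast
  then obtain e where "0 < e" and e: "\<And>x. x \<in> S \<Longrightarrow> \<exists>G\<in>\<G>. ball x e \<subseteq> G"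
    using Heine_Borel_lemma[OF \<open>compact S\<close>] unfolding \<G>_def by blast
  have "R p q" if "x \<in> S" "p \<in> S" "q \<in> S" "dist x p < e" "dist x q < e" for x p q
    using e[OF that(1)] that(2-) unfolding \<G>_def by (auto simp: subset_iff)
  with \<open>0 < e\<close> show thesis
    using that by blast
qed

lemma compact_symmetric_finite_net:
  fixes S :: "'a::real_normed_vector set"
  assumes "compact S" "uminus ` S \<subseteq> S" "0 < r"
  obtains P where "finite P" "P \<subseteq> S" "uminus ` P = P" "\<And>x. x \<in> S \<Longrightarrow> \<exists>p\<in>P. dist x p < r"
proof -
  obtain C where C: "C \<subseteq> S" "finite C" "S \<subseteq> (\<Union>c\<in>C. ball c r)"
    using compactE_image[OF \<open>compact S\<close>, of S "\<lambda>c. ball c r"] \<open>0 < r\<close> by force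
  show thesis
  proof
    show "finite (C \<union> uminus ` C)" "C \<union> uminus ` C \<subseteq> S"
      using C assms(2) by auto
    show "uminus ` (C \<union> uminus ` C) = C \<union> uminus ` C"
      by (simp add: image_Un image_image Un_commute)
    show "\<exists>p\<in>C \<union> uminus ` C. dist x p < r" if "x \<in> S" for x
      using C(3) that unfolding subset_iff by (metis UN_E UnI1 dist_commute mem_ball)
  qed
qed

lemma odd_map_to_vr_top:
  fixes h :: "'a::real_normed_vector \<Rightarrow> 'b::real_inner"
  assumes "compact S" "uminus ` S \<subseteq> S" "h ` S \<subseteq> Y" and odd: "\<And>x. x \<in> S \<Longrightarrow> h (- x) = - h x"
    and local: "\<And>x. x \<in> S \<Longrightarrow>
      \<exists>V. open V \<and> x \<in> V \<and> (\<forall>p\<in>S \<inter> V. \<forall>q\<in>S \<inter> V. sdist (h p) (h q) \<le> \<delta>)"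
  obtains g where "continuous_map (top_of_set S) (vr_top Y \<delta>) g"
    "\<And>x. x \<in> S \<Longrightarrow> g (- x) = vr_antipode (g x)"
proof -
  obtain r where "0 < r" and close: "\<And>x p q. \<lbrakk>x \<in> S; p \<in> S; q \<in> S; dist x p < r; dist x q < r\<rbrakk>
      \<Longrightarrow> sdist (h p) (h q) \<le> \<delta>"
    using Lebesgue_number_pairwise[OF \<open>compact S\<close> local] by blast
  obtain P where P: "finite P" "P \<subseteq> S" "uminus ` P = P" and cover: "\<And>x. x \<in> S \<Longrightarrow> \<exists>p\<in>P. dist x p < r"
    using compact_symmetric_finite_net[OF assms(1,2) \<open>0 < r\<close>] by blast
  have "is_simplex Y \<delta> (h ` {p \<in> P. dist x p < r})" if "x \<in> S" for x
    using P(1,2) cover[OF that] assms(3) by (force simp: is_simplex_def intro!: close[OF that])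
  then have "nerve_map r P h \<in> topspace (top_of_set S) \<rightarrow> vr_carrier Y \<delta>"
    by (simp add: Pi_iff nerve_map_in_vr_carrier[OF P(1)])
  moreover have "supp (nerve_map r P h x) \<subseteq> h ` P" if x: "x \<in> S" for x
  proof -
    obtain p where "p \<in> P" "dist x p < r"
      using cover[OF x] by blast
    then show ?thesis
      by (auto simp: supp_nerve_map[OF P(1)])
  qed
  ultimately have "continuous_map (top_of_set S) (vr_top Y \<delta>) (nerve_map r P h)"
    using P(1) by (intro continuous_map_into_vr_top[where W = "h ` P"] continuous_map_nerve_map cover) auto
  moreover have "nerve_map r P h (- x) = vr_antipode (nerve_map r P h x)" for x
    using P odd by (intro nerve_map_uminus) auto
  ultimately show thesis
    using that by blast
qed

lemma c_VR_le:
  assumes "0 \<le> r" "continuous_map (top_of_set S) (vr_top T r) g"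
    "\<And>x. x \<in> S \<Longrightarrow> g (- x) = vr_antipode (g x)"
  shows "c_VR S T \<le> r"
  unfolding c_VR_def using assms by (intro cInf_lower bdd_belowI[of _ 0]) auto

lemma Phi_swap: "Phi f (b, a) = - Phi f (a, b)"
  unfolding Phi_def by (simp add: norm_minus_commute) (metis minus_diff_eq scaleR_minus_right)

lemma norm_Phi: "f a \<noteq> f b \<Longrightarrow> norm (Phi f (a, b)) = 1"
  by (simp add: Phi_def)

lemma sdist_le_pi:
  assumes "norm u = 1" "norm v = 1"
  shows "sdist u v \<le> pi"
proof -
  have "\<bar>u \<bullet> v\<bar> \<le> 1"
    using Cauchy_Schwarz_ineq2[of u v] assms by simp
  then show ?thesis
    unfolding sdist_def by (intro arccos_ubound) auto
qed

lemma topspace_conf2: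
  "topspace (conf2 X) = {p. fst p \<in> topspace X \<and> snd p \<in> topspace X \<and> fst p \<noteq> snd p}"
  by (auto simp: conf2_def)

lemma c_VR_le_alpha:
  fixes f :: "'a::real_normed_vector \<Rightarrow> 'b::real_inner"
  assumes "compact S" "uminus ` S \<subseteq> S"
    and antipodal: "continuous_map (top_of_set S) (conf2 X) (\<lambda>x. (x, - x))"
    and inj: "inj_on f (topspace X)"
  shows "c_VR S (sphere (0::'b) 1) \<le> alpha X f"
  unfolding alpha_def modulus_def
proof (rule cInf_greatest)
  have unit: "norm (Phi f u) = 1" if "u \<in> topspace (conf2 X)" for u
    using that inj norm_Phi[of f "fst u" "snd u"] by (auto simp: topspace_conf2 inj_on_def)
  then show "{\<delta>. 0 \<le> \<delta> \<and> (\<forall>x\<in>topspace (conf2 X). \<exists>U. openin (conf2 X) U \<and> x \<in> U \<and>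
      (\<forall>u\<in>U. \<forall>v\<in>U. sdist (Phi f u) (Phi f v) \<le> \<delta>))} \<noteq> {}"
    by (intro ex_in_conv[THEN iffD1] exI[of _ pi]) (auto intro!: exI[of _ "topspace (conf2 X)"] sdist_le_pi)
  fix \<delta> assume "\<delta> \<in> {\<delta>. 0 \<le> \<delta> \<and> (\<forall>x\<in>topspace (conf2 X). \<exists>U. openin (conf2 X) U \<and> x \<in> U \<and>
      (\<forall>u\<in>U. \<forall>v\<in>U. sdist (Phi f u) (Phi f v) \<le> \<delta>))}"
  then have "0 \<le> \<delta>" and small: "\<And>x. x \<in> topspace (conf2 X) \<Longrightarrow> \<exists>U. openin (conf2 X) U \<and> x \<in> U \<and>
      (\<forall>u\<in>U. \<forall>v\<in>U. sdist (Phi f u) (Phi f v) \<le> \<delta>)"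
    by auto
  define h where "h x = Phi f (x, - x)" for x
  have pair: "(x, - x) \<in> topspace (conf2 X)" if "x \<in> S" for x
    using antipodal that by (auto simp: continuous_map_def)
  have sphere: "h ` S \<subseteq> sphere 0 1"
    using unit pair by (auto simp: h_def)
  have odd: "h (- x) = - h x" for x
    using Phi_swap by (simp add: h_def)
  have local: "\<exists>V. open V \<and> x \<in> V \<and> (\<forall>p\<in>S \<inter> V. \<forall>q\<in>S \<inter> V. sdist (h p) (h q) \<le> \<delta>)"
    if x: "x \<in> S" for x
  proof -
    obtain U where U: "openin (conf2 X) U" "(x, - x) \<in> U"
      "\<forall>u\<in>U. \<forall>v\<in>U. sdist (Phi f u) (Phi f v) \<le> \<delta>"
      using small[OF pair[OF x]] by blast
    have "openin (top_of_set S) {y \<in> S. (y, - y) \<in> U}"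
      using openin_continuous_map_preimage[OF antipodal U(1)] by simp
    then obtain V where "open V" "{y \<in> S. (y, - y) \<in> U} = S \<inter> V"
      by (auto simp: openin_open)
    then show ?thesis
      using x U(2,3) by (intro exI[of _ V]) (auto simp: h_def)
  qed
  obtain g where "continuous_map (top_of_set S) (vr_top (sphere (0::'b) 1) \<delta>) g"
    "\<And>x. x \<in> S \<Longrightarrow> g (- x) = vr_antipode (g x)"
    using odd_map_to_vr_top[OF assms(1,2) sphere odd local] by blast
  then show "c_VR S (sphere (0::'b) 1) \<le> \<delta>"
    using \<open>0 \<le> \<delta>\<close> by (rule c_VR_le[rotated])
qed

lemma eq_neg_self_iff: "(x::'a::real_vector) = - x \<longleftrightarrow> x = 0"
  by (metis add.right_inverse minus_zero scaleR_2 scaleR_eq_0_iff zero_neq_numeral)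

lemma continuous_map_antipodal_conf2:
  fixes S :: "'a::real_normed_vector set"
  assumes "S \<subseteq> T" "uminus ` S \<subseteq> T" "0 \<notin> S"
  shows "continuous_map (top_of_set S) (conf2 (top_of_set T)) (\<lambda>x. (x, - x))"
  unfolding conf2_def
proof (rule continuous_map_into_subtopology)
  show "continuous_map (top_of_set S) (prod_topology (top_of_set T) (top_of_set T)) (\<lambda>x. (x, - x))"
    using assms(1,2) unfolding continuous_map_paired
    by (auto intro!: continuous_map_into_subtopology continuous_on_id continuous_on_minus)
  show "(\<lambda>x. (x, - x)) \<in> topspace (top_of_set S) \<rightarrow>
      {p. fst p \<in> topspace (top_of_set T) \<and> snd p \<in> topspace (top_of_set T) \<and> fst p \<noteq> snd p}"
    using assms by (auto simp: eq_neg_self_iff)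
qed

theorem corollary3p6:
  fixes k d :: nat
  assumes "DIM('a::euclidean_space) = k + 1"
    and "DIM('b::euclidean_space) = d"
    and "d \<ge> 1" and "k \<ge> d - 1"
  shows "(\<forall>f :: 'a \<Rightarrow> 'b. inj f \<longrightarrow>
            alpha euclidean f \<ge> c_VR (sphere (0::'a) 1) (sphere (0::'b) 1))
       \<and> (\<forall>f :: 'a \<Rightarrow> 'b. inj_on f (sphere 0 1) \<longrightarrow>
            alpha (subtopology euclidean (sphere 0 1)) f \<ge> c_VR (sphere (0::'a) 1) (sphere (0::'b) 1))"
proof (intro conjI allI impI)
  have sphere: "compact (sphere (0::'a) 1)" "uminus ` sphere (0::'a) 1 \<subseteq> sphere 0 1"
    "0 \<notin> sphere (0::'a) 1"
    by auto
  fix f :: "'a \<Rightarrow> 'b"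
  show "alpha euclidean f \<ge> c_VR (sphere (0::'a) 1) (sphere (0::'b) 1)" if "inj f"
    using c_VR_le_alpha[OF sphere(1,2) continuous_map_antipodal_conf2[of _ UNIV]] sphere(3) that
    by simp
  show "alpha (subtopology euclidean (sphere 0 1)) f \<ge> c_VR (sphere (0::'a) 1) (sphere (0::'b) 1)"
    if "inj_on f (sphere 0 1)"
    using c_VR_le_alpha[OF sphere(1,2) continuous_map_antipodal_conf2[OF order_refl sphere(2,3)]] that
    by simp
qed

end
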